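(* The function $K_2:[0,1]\times[0,1]\to\mathbb R$ is not continuous at the point $(0,0)$. Furthermore, there is no function $f:[0,1]\times[0,1]\to\mathbb R$ that is continuous at $(0,0)$ and for which the set $\{(x,y)\in[0,1]\times[0,1]: f(x,y)=K_2(x,y)\}$ is dense in $[0,1]\times[0,1]$.
   Context: Let $K:[0,1]\times[0,1]\to\mathbb R$ be defined by $K(x,y)=\frac12-\{(xy)^{-1}\}$ if $0<x,y\le 1$, and $K(x,y)=0$ if $0\le x,y\le1$ and $xy=0$, where $\{\alpha\}=\alpha-\lfloor\alpha\rfloor$. Define $K_2(x,y)=\int_0^1K(x,z)K(z,y)\,dz$ for $0\le x,y\le1$. *)

theory Defs
  imports "HOL-Analysis.Analysis"
begin

definition K :: "real \<Rightarrow> real \<Rightarrow> real" where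
  "K x y = (if x * y = 0 then 0 else 1/2 - frac (1 / (x * y)))"

definition K2 :: "real \<Rightarrow> real \<Rightarrow> real" where
  "K2 x y = integral {0..1} (\<lambda>z. K x z * K z y)"

end

theory Submission
  imports Defs
begin

text \<open>Off the axes \<open>K\<^sub>2\<close> is continuous: for fixed \<open>z\<close> the kernel \<open>K(x,z)\<close> is continuous in \<open>x\<close>
  unless \<open>1/(xz)\<close> is an integer, which happens only for countably many \<open>z\<close>, so dominated
  convergence applies. Writing \<open>saw v = 1/2 - frac v\<close>,
  \<open>K\<^sub>2(t,t)\<close> is essentially the integral of \<open>saw(1/(tz))\<^sup>2\<close> over \<open>z\<close>, which tends to the
  mean value \<open>1/12\<close> of \<open>saw\<^sup>2\<close> as \<open>t \<rightarrow> 0\<close>; the duplication formula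
  \<open>saw(2v) = saw v + saw(v + 1/2)\<close> expresses \<open>saw v \<cdot> saw(2v)\<close> through squares and gives
  \<open>K\<^sub>2(t,t/2) \<rightarrow> 1/24\<close>. A function continuous at the origin that agrees with \<open>K\<^sub>2\<close> on a
  dense set would, by continuity of \<open>K\<^sub>2\<close> at the points \<open>(t,t)\<close> and \<open>(t,t/2)\<close>, take both
  limits as its value at the origin.\<close>

lemma integrable_on_bounded_borel:
  fixes f :: "real \<Rightarrow> real"
  assumes "f \<in> borel_measurable borel" "\<And>x. \<bar>f x\<bar> \<le> B"
  shows "f integrable_on {a..b}"
proof (rule measurable_bounded_by_integrable_imp_integrable_real[where g="\<lambda>_. B"])
  show "f \<in> borel_measurable (lebesgue_on {a..b})"
    using assms(1) by (simp add: measurable_completion measurable_restrict_space1)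
qed (use assms in auto)

lemma countable_imp_negligible: "countable (N :: 'a::euclidean_space set) \<Longrightarrow> negligible N"
  using negligible_countable_Union[of "(\<lambda>x. {x}) ` N"] by auto

lemma continuous_on_comp_frac_unit_interval:
  fixes q :: "real \<Rightarrow> 'a::topological_space"
  assumes "continuous_on {0..1} q" "q 0 = q 1"
  shows "continuous_on {of_int m..of_int m + 1} (\<lambda>v. q (frac v))"
proof -
  have cont: "continuous_on {of_int m..of_int m + 1} (\<lambda>v. q (v - of_int m))"
    by (rule continuous_on_compose2[OF assms(1)]) (auto intro: continuous_intros)
  have eq: "q (frac v) = q (v - of_int m)" if "v \<in> {of_int m..of_int m + 1}" for v
  proof (cases "v = of_int m + 1")
    case True
    then show ?thesis
      using assms(2) by simp
  next
    case False
    with that have "frac v = v - of_int m"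
      by (subst frac_unique_iff) auto
    then show ?thesis by simp
  qed
  show ?thesis
    by (rule continuous_on_eq[OF cont]) (simp add: eq)
qed

lemma isCont_comp_frac:
  fixes q :: "real \<Rightarrow> 'a::topological_space"
  assumes "continuous_on {0..1} q" "q 0 = q 1"
  shows "isCont (\<lambda>v. q (frac v)) x"
proof (rule continuous_on_interior)
  let ?m = "\<lfloor>x\<rfloor>"
  have "{of_int (?m - 1)..of_int (?m - 1) + 1} \<union> {of_int ?m..of_int ?m + 1} = {of_int ?m - 1..of_int ?m + 1 :: real}"
    by auto
  moreover have "continuous_on ({of_int (?m - 1)..of_int (?m - 1) + 1} \<union> {of_int ?m..of_int ?m + 1}) (\<lambda>v. q (frac v))"
    by (intro continuous_on_closed_Un continuous_on_comp_frac_unit_interval assms) auto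
  ultimately show "continuous_on {of_int ?m - 1..of_int ?m + 1} (\<lambda>v. q (frac v))"
    by simp
  show "x \<in> interior {of_int ?m - 1..of_int ?m + 1}"
    by simp linarith
qed

lemma has_real_derivative_comp_frac:
  assumes "(q has_real_derivative D) (at (frac x))" "x \<notin> \<int>"
  shows "((\<lambda>v. q (frac v)) has_real_derivative D) (at x)"
proof -
  have "\<forall>\<^sub>F v in at x. \<lfloor>v\<rfloor> = \<lfloor>x\<rfloor>"
    by (rule eventually_floor_eq[OF tendsto_ident_at assms(2)])
  then have ev: "\<forall>\<^sub>F v in nhds x. q (frac v) = q (v - \<lfloor>x\<rfloor>)"
    unfolding eventually_at_filter by eventually_elim (auto simp: frac_def)
  have "((\<lambda>v. q (v - \<lfloor>x\<rfloor>)) has_real_derivative D * 1) (at x)"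
    using assms(1) by (intro DERIV_chain2[where f = q]) (auto simp: frac_def intro!: derivative_eq_intros)
  then show ?thesis
    using DERIV_cong_ev[OF refl ev refl] by simp
qed

lemma obtain_dense_approximants:
  fixes g :: "'a::metric_space \<Rightarrow> 'b::metric_space"
  assumes "S \<subseteq> closure T" "\<And>n. a n \<in> S" "\<And>n. continuous (at (a n) within S) g" "T \<subseteq> S"
  obtains b where "\<And>n. b n \<in> T" "\<And>n. dist (b n) (a n) < inverse (Suc n)"
    "\<And>n. dist (g (b n)) (g (a n)) < inverse (Suc n)"
proof -
  have "\<exists>b. b \<in> T \<and> dist b (a n) < inverse (Suc n) \<and> dist (g b) (g (a n)) < inverse (Suc n)" for n
  proof -
    have pos: "0 < inverse (real (Suc n))"
      by simp
    obtain r where r: "r > 0" "\<forall>x\<in>S. dist x (a n) < r \<longrightarrow> dist (g x) (g (a n)) < inverse (Suc n)"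
      using assms(3)[of n, unfolded continuous_within_eps_delta, rule_format, OF pos] by blast
    have "a n \<in> closure T" "0 < min r (inverse (Suc n))"
      using assms(1,2) r(1) by auto
    then obtain b where "b \<in> T" "dist b (a n) < min r (inverse (Suc n))"
      unfolding closure_approachable by blast
    with r assms(4) show ?thesis
      by auto
  qed
  then show ?thesis
    using that by metis
qed

lemma tendsto_of_dense_agreement:
  fixes f g :: "'a::metric_space \<Rightarrow> 'b::real_normed_vector"
  assumes f: "continuous (at p within S) f"
    and agree: "S \<subseteq> closure {x \<in> S. f x = g x}"
    and a: "a \<longlonglongrightarrow> p" "\<And>n. a n \<in> S" "\<And>n. continuous (at (a n) within S) g"
  shows "(\<lambda>n. g (a n)) \<longlonglongrightarrow> f p"
proof -
  have sub: "{x \<in> S. f x = g x} \<subseteq> S"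
    by blast
  obtain b where b: "\<And>n. b n \<in> {x \<in> S. f x = g x}" "\<And>n. dist (b n) (a n) < inverse (Suc n)"
    "\<And>n. dist (g (b n)) (g (a n)) < inverse (Suc n)"
    by (rule obtain_dense_approximants[of S _ a g, OF agree a(2) a(3) sub]) metis
  have "b \<longlonglongrightarrow> p"
    unfolding tendsto_dist_iff[of b]
  proof (rule Lim_null_comparison)
    have tri: "norm (dist (b n) p) \<le> inverse (Suc n) + dist (a n) p" for n
      using b(2)[of n] dist_triangle[of "b n" p "a n"] by simp
    show "\<forall>\<^sub>F n in sequentially. norm (dist (b n) p) \<le> inverse (Suc n) + dist (a n) p"
      by (rule always_eventually) (use tri in blast)
    show "(\<lambda>n. inverse (real (Suc n)) + dist (a n) p) \<longlonglongrightarrow> 0"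
      by (intro tendsto_add_zero LIMSEQ_inverse_real_of_nat tendsto_dist_iff[THEN iffD1, OF a(1)])
  qed
  then have "(\<lambda>n. f (b n)) \<longlonglongrightarrow> f p"
    using b(1) by (intro continuous_within_tendsto_compose[OF f] always_eventually) auto
  moreover have "(\<lambda>n. g (a n) - f (b n)) \<longlonglongrightarrow> 0"
  proof (rule Lim_null_comparison)
    have close: "norm (g (a n) - f (b n)) \<le> inverse (Suc n)" for n
      using b(1,3)[of n] by (simp add: dist_norm norm_minus_commute)
    show "\<forall>\<^sub>F n in sequentially. norm (g (a n) - f (b n)) \<le> inverse (Suc n)"
      by (rule always_eventually) (use close in blast)
  qed (rule LIMSEQ_inverse_real_of_nat)
  ultimately show ?thesis
    by (rule Lim_transform)
qed

definition saw :: "real \<Rightarrow> real" where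
  "saw v = 1/2 - frac v"

lemma abs_saw_le: "\<bar>saw v\<bar> \<le> 1/2"
  using frac_ge_0[of v] frac_lt_1[of v] unfolding saw_def by linarith

lemma saw_double: "saw (2 * v) = saw v + saw (v + 1/2)"
proof -
  have "frac v < 1/2 \<Longrightarrow> frac (2 * v) = 2 * frac v \<and> frac (v + 1/2) = frac v + 1/2"
    using Ints_of_int[of "2 * \<lfloor>v\<rfloor>"] Ints_of_int[of "\<lfloor>v\<rfloor>"]
    unfolding frac_unique_iff by (auto simp: frac_def)
  moreover have "frac v \<ge> 1/2 \<Longrightarrow> frac (2 * v) = 2 * frac v - 1 \<and> frac (v + 1/2) = frac v - 1/2"
    using Ints_of_int[of "2 * \<lfloor>v\<rfloor> + 1"] Ints_of_int[of "\<lfloor>v\<rfloor> + 1"] frac_lt_1[of v]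
    unfolding frac_unique_iff by (auto simp: frac_def)
  ultimately show ?thesis
    unfolding saw_def by force
qed

lemma saw_mult_saw_double:
  "saw v * saw (2 * v) = ((saw v)\<^sup>2 + (saw (2 * v))\<^sup>2 - (saw (v + 1/2))\<^sup>2) / 2"
  unfolding saw_double by (simp add: power2_eq_square algebra_simps)

text \<open>This is \<open>B\<^sub>3(frac v)/3\<close> for the Bernoulli polynomial \<open>B\<^sub>3\<close>; its derivative
  \<open>B\<^sub>2(frac v) = saw v\<^sup>2 - 1/12\<close> has mean zero over each period.\<close>
definition saw_sq_antideriv :: "real \<Rightarrow> real" where
  "saw_sq_antideriv v = frac v * (frac v - 1) * (2 * frac v - 1) / 6"

lemma isCont_saw_sq_antideriv: "isCont saw_sq_antideriv v"
  unfolding saw_sq_antideriv_def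
  by (rule isCont_comp_frac[where q = "\<lambda>u. u * (u - 1) * (2 * u - 1) / 6"])
    (intro continuous_intros | simp)+

lemma continuous_on_saw_sq_antideriv [continuous_intros]:
  "continuous_on S f \<Longrightarrow> continuous_on S (\<lambda>z. saw_sq_antideriv (f z))"
  using continuous_on_compose2[of UNIV saw_sq_antideriv S f] isCont_saw_sq_antideriv
  by (simp add: continuous_at_imp_continuous_on)

lemma saw_sq_antideriv_has_real_derivative:
  assumes "v \<notin> \<int>"
  shows "(saw_sq_antideriv has_real_derivative (saw v)\<^sup>2 - 1/12) (at v)"
proof -
  have "((\<lambda>u. u * (u - 1) * (2 * u - 1) / 6) has_real_derivative (1/2 - u)\<^sup>2 - 1/12) (at u)" for u
    by (auto intro!: derivative_eq_intros simp: field_simps power2_eq_square)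
  from has_real_derivative_comp_frac[OF this assms] show ?thesis
    by (simp add: saw_sq_antideriv_def[abs_def] saw_def)
qed

lemma abs_saw_sq_antideriv_le: "\<bar>saw_sq_antideriv v\<bar> \<le> 1/6"
proof -
  have "\<bar>frac v\<bar> \<le> 1" "\<bar>frac v - 1\<bar> \<le> 1" "\<bar>2 * frac v - 1\<bar> \<le> 1"
    using frac_ge_0[of v] frac_lt_1[of v] by linarith+
  then have "\<bar>frac v\<bar> * \<bar>frac v - 1\<bar> * \<bar>2 * frac v - 1\<bar> \<le> 1 * 1 * 1"
    by (intro mult_mono) auto
  then show ?thesis
    by (simp add: saw_sq_antideriv_def abs_mult)
qed

lemma finite_shifted_reciprocal_Ints:
  fixes \<alpha> \<beta> \<epsilon> :: real
  assumes "\<alpha> > 0" "\<epsilon> > 0"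
  shows "finite {z. \<epsilon> \<le> z \<and> \<alpha> / z + \<beta> \<in> \<int>}"
proof -
  define M where "M = \<lceil>\<alpha> / \<epsilon> + \<bar>\<beta>\<bar>\<rceil>"
  have "{z. \<epsilon> \<le> z \<and> \<alpha> / z + \<beta> \<in> \<int>} \<subseteq> (\<lambda>k. \<alpha> / (of_int k - \<beta>)) ` {-M..M}"
  proof
    fix z assume z: "z \<in> {z. \<epsilon> \<le> z \<and> \<alpha> / z + \<beta> \<in> \<int>}"
    then obtain k where k: "\<alpha> / z + \<beta> = of_int k"
      by (auto elim: Ints_cases)
    have "0 < \<alpha> / z" "\<alpha> / z \<le> \<alpha> / \<epsilon>"
      using assms z by (auto intro: divide_left_mono)
    then have "\<bar>k\<bar> \<le> M"
      using k unfolding M_def by linarith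
    moreover have "z = \<alpha> / (of_int k - \<beta>)"
    proof -
      have "of_int k - \<beta> = \<alpha> / z"
        using k by simp
      then show ?thesis
        using assms z by simp
    qed
    ultimately show "z \<in> (\<lambda>k. \<alpha> / (of_int k - \<beta>)) ` {-M..M}"
      by (auto intro!: image_eqI[where x = k])
  qed
  then show ?thesis
    by (rule finite_subset) auto
qed

lemma scaled_saw_sq_antideriv_has_real_derivative:
  assumes "z > 0" "\<alpha> / z + \<beta> \<notin> \<int>"
  shows "((\<lambda>z. z\<^sup>2 * saw_sq_antideriv (\<alpha> / z + \<beta>)) has_real_derivative
           2 * z * saw_sq_antideriv (\<alpha> / z + \<beta>) - \<alpha> * ((saw (\<alpha> / z + \<beta>))\<^sup>2 - 1/12)) (at z)"
proof -
  have deriv: "((\<lambda>z. saw_sq_antideriv (\<alpha> / z + \<beta>)) has_real_derivative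
          ((saw (\<alpha> / z + \<beta>))\<^sup>2 - 1/12) * (- \<alpha> / z\<^sup>2)) (at z)"
    using assms(1) saw_sq_antideriv_has_real_derivative[OF assms(2)]
    by (intro DERIV_chain2[where f = saw_sq_antideriv])
      (auto intro!: derivative_eq_intros simp: power2_eq_square field_simps)
  show ?thesis
    by (rule DERIV_cong[OF DERIV_mult[OF DERIV_pow[of 2 z] deriv]])
      (use assms(1) in \<open>simp add: power2_eq_square field_simps\<close>)
qed

text \<open>The weight \<open>z\<^sup>2\<close> makes the boundary terms and the remaining integrand bounded
  independently of \<open>\<alpha>\<close>; dividing by \<open>\<alpha>\<close> shows that \<open>saw\<^sup>2 - 1/12\<close> integrates to \<open>O(1/\<alpha>)\<close>.\<close>
lemma saw_sq_oscillation_has_integral: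
  assumes "\<alpha> > 0" "0 < \<epsilon>" "\<epsilon> \<le> 1"
  shows "((\<lambda>z. 2 * z * saw_sq_antideriv (\<alpha> / z + \<beta>) - \<alpha> * ((saw (\<alpha> / z + \<beta>))\<^sup>2 - 1/12))
           has_integral saw_sq_antideriv (\<alpha> + \<beta>) - \<epsilon>\<^sup>2 * saw_sq_antideriv (\<alpha> / \<epsilon> + \<beta>)) {\<epsilon>..1}"
proof -
  define F where "F = (\<lambda>z. z\<^sup>2 * saw_sq_antideriv (\<alpha> / z + \<beta>))"
  have fin: "finite {z \<in> {\<epsilon>..1}. \<alpha> / z + \<beta> \<in> \<int>}"
    by (rule finite_subset[OF _ finite_shifted_reciprocal_Ints[OF assms(1,2)]]) auto
  have cont: "continuous_on {\<epsilon>..1} F"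
    unfolding F_def using assms by (intro continuous_intros) auto
  have "((\<lambda>z. 2 * z * saw_sq_antideriv (\<alpha> / z + \<beta>) - \<alpha> * ((saw (\<alpha> / z + \<beta>))\<^sup>2 - 1/12))
           has_integral F 1 - F \<epsilon>) {\<epsilon>..1}"
  proof (rule fundamental_theorem_of_calculus_interior_strong[OF fin assms(3) _ cont])
    fix z assume "z \<in> {\<epsilon><..<1} - {z \<in> {\<epsilon>..1}. \<alpha> / z + \<beta> \<in> \<int>}"
    then have "z > 0" "\<alpha> / z + \<beta> \<notin> \<int>"
      using assms by auto
    from scaled_saw_sq_antideriv_has_real_derivative[OF this]
    show "(F has_vector_derivative
            2 * z * saw_sq_antideriv (\<alpha> / z + \<beta>) - \<alpha> * ((saw (\<alpha> / z + \<beta>))\<^sup>2 - 1/12)) (at z)"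
      by (simp add: F_def has_real_derivative_iff_has_vector_derivative)
  qed
  then show ?thesis
    by (simp add: F_def)
qed

lemma saw_sq_integral_estimate:
  assumes "\<alpha> > 0" "0 < \<epsilon>" "\<epsilon> \<le> 1"
  shows "(\<lambda>z. (saw (\<alpha> / z + \<beta>))\<^sup>2) integrable_on {\<epsilon>..1}"
    and "\<bar>integral {\<epsilon>..1} (\<lambda>z. (saw (\<alpha> / z + \<beta>))\<^sup>2) - (1 - \<epsilon>) / 12\<bar> \<le> 1 / \<alpha>"
proof -
  define G where "G z = 2 * z * saw_sq_antideriv (\<alpha> / z + \<beta>)" for z
  define R where "R = integral {\<epsilon>..1} G - (saw_sq_antideriv (\<alpha> + \<beta>) - \<epsilon>\<^sup>2 * saw_sq_antideriv (\<alpha> / \<epsilon> + \<beta>))"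
  have G_cont: "continuous_on {\<epsilon>..1} G"
    unfolding G_def[abs_def] using assms by (intro continuous_intros) auto
  have const: "((\<lambda>_. 1/12) has_integral (1 - \<epsilon>) / 12) {\<epsilon>..1}"
    using has_integral_const_real[of "1/12 :: real" \<epsilon> 1] assms(3) by simp
  have G_int: "(G has_integral integral {\<epsilon>..1} G) {\<epsilon>..1}"
    using integrable_continuous_interval[OF G_cont] by (simp add: has_integral_integral)
  have osc: "((\<lambda>z. G z - \<alpha> * ((saw (\<alpha> / z + \<beta>))\<^sup>2 - 1/12)) has_integral
      saw_sq_antideriv (\<alpha> + \<beta>) - \<epsilon>\<^sup>2 * saw_sq_antideriv (\<alpha> / \<epsilon> + \<beta>)) {\<epsilon>..1}"
    using saw_sq_oscillation_has_integral[OF assms] by (simp add: G_def)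
  have "((\<lambda>z. 1/12 + (G z - (G z - \<alpha> * ((saw (\<alpha> / z + \<beta>))\<^sup>2 - 1/12))) / \<alpha>)
      has_integral (1 - \<epsilon>) / 12 + R / \<alpha>) {\<epsilon>..1}"
    unfolding R_def by (intro has_integral_add[OF const] has_integral_divide has_integral_diff[OF G_int osc])
  then have I: "((\<lambda>z. (saw (\<alpha> / z + \<beta>))\<^sup>2) has_integral (1 - \<epsilon>) / 12 + R / \<alpha>) {\<epsilon>..1}"
    using assms(1) by simp
  then show "(\<lambda>z. (saw (\<alpha> / z + \<beta>))\<^sup>2) integrable_on {\<epsilon>..1}"
    by blast
  have "norm (integral {\<epsilon>..1} G) \<le> 1/3 * (1 - \<epsilon>)"
  proof (rule integral_bound[OF assms(3) G_cont])
    fix z assume "z \<in> {\<epsilon>..1}"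
    then have "2 * \<bar>z\<bar> * \<bar>saw_sq_antideriv (\<alpha> / z + \<beta>)\<bar> \<le> 2 * 1 * (1/6)"
      using assms abs_saw_sq_antideriv_le by (intro mult_mono) auto
    then show "norm (G z) \<le> 1/3"
      by (simp add: G_def abs_mult)
  qed
  then have "\<bar>integral {\<epsilon>..1} G\<bar> \<le> 1/3"
    using assms by simp
  moreover have "\<bar>\<epsilon>\<^sup>2 * saw_sq_antideriv (\<alpha> / \<epsilon> + \<beta>)\<bar> \<le> 1 * (1/6)"
    unfolding abs_mult using assms abs_saw_sq_antideriv_le by (intro mult_mono) (auto simp: power_le_one)
  ultimately have "\<bar>R\<bar> \<le> 1"
    using abs_saw_sq_antideriv_le[of "\<alpha> + \<beta>"] unfolding R_def abs_le_iff by argo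
  with assms(1) show "\<bar>integral {\<epsilon>..1} (\<lambda>z. (saw (\<alpha> / z + \<beta>))\<^sup>2) - (1 - \<epsilon>) / 12\<bar> \<le> 1 / \<alpha>"
    by (simp add: integral_unique[OF I] divide_right_mono)
qed

lemma K_eq_saw: "x \<noteq> 0 \<Longrightarrow> y \<noteq> 0 \<Longrightarrow> K x y = saw (1 / (x * y))"
  by (simp add: K_def saw_def)

lemma K_commute: "K x y = K y x"
  by (simp add: K_def mult.commute)

lemma abs_K_le: "\<bar>K x y\<bar> \<le> 1/2"
  using abs_saw_le by (simp add: K_def saw_def[symmetric])

lemma abs_K_mult_K_le: "\<bar>K x z * K z y\<bar> \<le> 1/4"
proof -
  have "\<bar>K x z * K z y\<bar> \<le> 1/2 * (1/2)"
    unfolding abs_mult using abs_K_le by (intro mult_mono) auto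
  then show ?thesis by simp
qed

lemma K_mult_K_integrable_on: "(\<lambda>z. K x z * K z y) integrable_on {a..b}"
proof (rule integrable_on_bounded_borel[OF _ abs_K_mult_K_le])
  show "(\<lambda>z. K x z * K z y) \<in> borel_measurable borel"
    unfolding K_def frac_def by measurable
qed

lemma countable_reciprocal_Ints:
  assumes "(a::real) \<noteq> 0"
  shows "countable {z. 1 / (a * z) \<in> \<int>}"
proof -
  have "{z. 1 / (a * z) \<in> \<int>} \<subseteq> (\<lambda>k. 1 / (a * k)) ` \<int>"
  proof
    fix z assume "z \<in> {z. 1 / (a * z) \<in> \<int>}"
    moreover have "z = 1 / (a * (1 / (a * z)))"
      using assms by (cases "z = 0") auto
    ultimately show "z \<in> (\<lambda>k. 1 / (a * k)) ` \<int>" by blast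
  qed
  then show ?thesis
    using countable_subset countable_int by blast
qed

lemma isCont_K_left:
  assumes "a \<noteq> 0" "z \<noteq> 0" "1 / (a * z) \<notin> \<int>"
  shows "isCont (\<lambda>x. K x z) a"
proof -
  have eq: "\<forall>\<^sub>F x in nhds a. K x z = 1/2 - frac (1 / (x * z))"
    using t1_space_nhds[OF assms(1)] by eventually_elim (use assms(2) in \<open>simp add: K_def\<close>)
  have "isCont (\<lambda>x. 1/2 - frac (1 / (x * z))) a"
    using assms by (intro continuous_intros isCont_o2[OF _ continuous_frac]) auto
  then show ?thesis
    using isCont_cong[OF eq] by simp
qed

lemma continuous_K2:
  assumes a: "a \<noteq> 0" and b: "b \<noteq> 0"
  shows "continuous (at (a, b) within S) (\<lambda>(x, y). K2 x y)"
proof (rule continuous_within_sequentiallyI)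
  fix u :: "nat \<Rightarrow> real \<times> real"
  assume u: "u \<longlonglongrightarrow> (a, b)"
  have x: "(\<lambda>n. fst (u n)) \<longlonglongrightarrow> a" and y: "(\<lambda>n. snd (u n)) \<longlonglongrightarrow> b"
    using tendsto_fst[OF u] tendsto_snd[OF u] by auto
  define N where "N = {z. 1 / (a * z) \<in> \<int>} \<union> {z. 1 / (b * z) \<in> \<int>}"
  have "negligible N"
    unfolding N_def using a b
    by (intro countable_imp_negligible countable_Un countable_reciprocal_Ints)
  then have spike: "negligible ({0..1} \<inter> N)"
    by (rule negligible_subset) auto
  define S where "S = {0..1::real} - N"
  have integral_S: "integral {0..1} f = integral S f" for f :: "real \<Rightarrow> real"
    unfolding S_def by (rule integral_spike_set) (auto intro: negligible_subset[OF spike])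
  have integrable_S: "f integrable_on S" if "f integrable_on {0..1}" for f :: "real \<Rightarrow> real"
    unfolding S_def by (rule integrable_spike_set[OF that]) (auto intro: negligible_subset[OF spike])
  have "(\<lambda>n. integral S (\<lambda>z. K (fst (u n)) z * K z (snd (u n)))) \<longlonglongrightarrow> integral S (\<lambda>z. K a z * K z b)"
  proof (rule dominated_convergence(2)[where h="\<lambda>_. 1/4"])
    show "(\<lambda>z. K (fst (u n)) z * K z (snd (u n))) integrable_on S" for n
      by (intro integrable_S K_mult_K_integrable_on)
    show "(\<lambda>_. 1/4::real) integrable_on S"
      by (intro integrable_S integrable_const_ivl)
    show "norm (K (fst (u n)) z * K z (snd (u n))) \<le> 1/4" for n z
      using abs_K_mult_K_le by simp
    fix z assume "z \<in> S"
    then have "z \<noteq> 0" "1 / (a * z) \<notin> \<int>" "1 / (b * z) \<notin> \<int>"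
      by (auto simp: S_def N_def)
    then have "(\<lambda>n. K (fst (u n)) z * K (snd (u n)) z) \<longlonglongrightarrow> K a z * K b z"
      using a b by (intro tendsto_mult isCont_tendsto_compose[OF isCont_K_left] x y)
    then show "(\<lambda>n. K (fst (u n)) z * K z (snd (u n))) \<longlonglongrightarrow> K a z * K z b"
      by (simp add: K_commute[of z])
  qed
  then show "(\<lambda>n. (\<lambda>(x, y). K2 x y) (u n)) \<longlonglongrightarrow> (\<lambda>(x, y). K2 x y) (a, b)"
    by (simp add: K2_def integral_S case_prod_beta)
qed

lemma K2_split:
  assumes "0 \<le> \<epsilon>" "\<epsilon> \<le> 1"
  shows "K2 x y = integral {0..\<epsilon>} (\<lambda>z. K x z * K z y) + integral {\<epsilon>..1} (\<lambda>z. K x z * K z y)"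
  unfolding K2_def using assms
  by (simp add: Henstock_Kurzweil_Integration.integral_combine K_mult_K_integrable_on)

lemma abs_integral_K_mult_K_le:
  assumes "0 \<le> \<epsilon>"
  shows "\<bar>integral {0..\<epsilon>} (\<lambda>z. K x z * K z y)\<bar> \<le> \<epsilon> / 4"
proof -
  have "norm (integral {0..\<epsilon>} (\<lambda>z. K x z * K z y)) \<le> integral {0..\<epsilon>} (\<lambda>z. 1/4)"
    using abs_K_mult_K_le
    by (intro integral_norm_bound_integral K_mult_K_integrable_on integrable_const_ivl) auto
  then show ?thesis
    using assms by simp
qed

lemma K2_diagonal_lower_bound:
  assumes "0 < t" "0 < \<epsilon>" "\<epsilon> \<le> 1"
  shows "(1 - \<epsilon>) / 12 - t \<le> K2 t t"
proof -
  have "integral {\<epsilon>..1} (\<lambda>z. K t z * K z t) = integral {\<epsilon>..1} (\<lambda>z. (saw ((1/t) / z + 0))\<^sup>2)"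
    using assms by (intro integral_cong) (auto simp: K_eq_saw K_commute[of _ t] power2_eq_square)
  moreover have "\<bar>integral {\<epsilon>..1} (\<lambda>z. (saw ((1/t) / z + 0))\<^sup>2) - (1 - \<epsilon>) / 12\<bar> \<le> t"
    using saw_sq_integral_estimate(2)[of "1/t" \<epsilon> 0] assms by simp
  moreover have "0 \<le> integral {0..\<epsilon>} (\<lambda>z. K t z * K z t)"
    by (intro integral_nonneg K_mult_K_integrable_on) (simp add: K_commute[of _ t])
  moreover have "K2 t t = integral {0..\<epsilon>} (\<lambda>z. K t z * K z t) + integral {\<epsilon>..1} (\<lambda>z. K t z * K z t)"
    using assms by (intro K2_split) auto
  ultimately show ?thesis
    by linarith
qed

lemma K2_half_upper_bound:
  assumes "0 < t" "0 < \<epsilon>" "\<epsilon> \<le> 1"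
  shows "K2 t (t/2) \<le> \<epsilon> / 4 + (1 - \<epsilon>) / 24 + 5/4 * t"
proof -
  define h where "h \<alpha> \<beta> z = (saw (\<alpha> / z + \<beta>))\<^sup>2" for \<alpha> \<beta> z
  have int: "h \<alpha> \<beta> integrable_on {\<epsilon>..1}"
    and est: "\<bar>integral {\<epsilon>..1} (h \<alpha> \<beta>) - (1 - \<epsilon>) / 12\<bar> \<le> 1 / \<alpha>" if "\<alpha> > 0" for \<alpha> \<beta>
    using saw_sq_integral_estimate[OF that assms(2,3)] unfolding h_def[abs_def] by auto
  have "K t z * K z (t/2) = (h (1/t) 0 z + h (2/t) 0 z - h (1/t) (1/2) z) / 2"
    if "z \<in> {\<epsilon>..1}" for z
  proof -
    have "K t z = saw (1 / (t * z))" "K z (t/2) = saw (2 * (1 / (t * z)))"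
      using that assms by (simp_all add: K_eq_saw mult.commute)
    then show ?thesis
      using saw_mult_saw_double[of "1 / (t * z)"] by (simp add: h_def)
  qed
  then have "integral {\<epsilon>..1} (\<lambda>z. K t z * K z (t/2))
      = integral {\<epsilon>..1} (\<lambda>z. (h (1/t) 0 z + h (2/t) 0 z - h (1/t) (1/2) z) / 2)"
    by (rule integral_cong)
  also have "\<dots> = (integral {\<epsilon>..1} (h (1/t) 0) + integral {\<epsilon>..1} (h (2/t) 0)
      - integral {\<epsilon>..1} (h (1/t) (1/2))) / 2"
    using int[of "1/t"] int[of "2/t"] assms
    by (simp add: integral_divide integral_add integral_diff integrable_add)
  finally have split_tail: "integral {\<epsilon>..1} (\<lambda>z. K t z * K z (t/2)) = (integral {\<epsilon>..1} (h (1/t) 0)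
      + integral {\<epsilon>..1} (h (2/t) 0) - integral {\<epsilon>..1} (h (1/t) (1/2))) / 2" .
  have "\<bar>integral {\<epsilon>..1} (h (1/t) 0) - (1 - \<epsilon>) / 12\<bar> \<le> t"
    "\<bar>integral {\<epsilon>..1} (h (2/t) 0) - (1 - \<epsilon>) / 12\<bar> \<le> t/2"
    "\<bar>integral {\<epsilon>..1} (h (1/t) (1/2)) - (1 - \<epsilon>) / 12\<bar> \<le> t"
    using est[of "1/t" 0] est[of "2/t" 0] est[of "1/t" "1/2"] assms by simp_all
  moreover have "integral {0..\<epsilon>} (\<lambda>z. K t z * K z (t/2)) \<le> \<epsilon> / 4"
    using abs_integral_K_mult_K_le[of \<epsilon> t "t/2"] assms by simp
  moreover have "K2 t (t/2) = integral {0..\<epsilon>} (\<lambda>z. K t z * K z (t/2))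
      + integral {\<epsilon>..1} (\<lambda>z. K t z * K z (t/2))"
    using assms by (intro K2_split) auto
  ultimately show ?thesis
    using split_tail unfolding abs_le_iff by argo
qed

lemma tendsto_K2_along_ray:
  fixes f :: "real \<times> real \<Rightarrow> real"
  assumes f: "continuous (at (0,0) within ({0..1} \<times> {0..1})) f"
    and dense: "{0..1} \<times> {0..1} \<subseteq> closure {p \<in> {0..1} \<times> {0..1}. f p = K2 (fst p) (snd p)}"
    and t: "t \<longlonglongrightarrow> 0" "\<And>n. 0 < t n" "\<And>n. t n \<le> 1"
    and c: "0 < c" "c \<le> 1"
  shows "(\<lambda>n. K2 (t n) (c * t n)) \<longlonglongrightarrow> f (0,0)"
proof -
  have "(\<lambda>n. K2 (fst (t n, c * t n)) (snd (t n, c * t n))) \<longlonglongrightarrow> f (0,0)"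
  proof (rule tendsto_of_dense_agreement[OF f dense])
    show "(\<lambda>n. (t n, c * t n)) \<longlonglongrightarrow> (0, 0)"
      using tendsto_Pair[OF t(1) tendsto_mult_right_zero[OF t(1)]] by simp
    show "(t n, c * t n) \<in> {0..1} \<times> {0..1}" for n
      using t(2,3)[of n] c mult_le_one[of c "t n"] by auto
    show "continuous (at (t n, c * t n) within {0..1} \<times> {0..1}) (\<lambda>p. K2 (fst p) (snd p))" for n
      using continuous_K2[of "t n" "c * t n"] t(2)[of n] c by (simp add: case_prod_beta')
  qed
  then show ?thesis
    by simp
qed

lemma no_function_continuous_at_origin_agreeing_densely_with_K2:
  "\<not> (\<exists>f :: real \<times> real \<Rightarrow> real.
          continuous (at (0,0) within ({0..1} \<times> {0..1})) f \<and>
          {0..1} \<times> {0..1} \<subseteq> closure {p \<in> {0..1} \<times> {0..1}. f p = K2 (fst p) (snd p)})"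
proof
  assume "\<exists>f :: real \<times> real \<Rightarrow> real.
          continuous (at (0,0) within ({0..1} \<times> {0..1})) f \<and>
          {0..1} \<times> {0..1} \<subseteq> closure {p \<in> {0..1} \<times> {0..1}. f p = K2 (fst p) (snd p)}"
  then obtain f :: "real \<times> real \<Rightarrow> real"
    where f: "continuous (at (0,0) within ({0..1} \<times> {0..1})) f"
      and dense: "{0..1} \<times> {0..1} \<subseteq> closure {p \<in> {0..1} \<times> {0..1}. f p = K2 (fst p) (snd p)}"
    by blast
  define t where "t = (\<lambda>n. inverse (real (Suc n)))"
  have t: "t \<longlonglongrightarrow> 0" "\<And>n. 0 < t n" "\<And>n. t n \<le> 1"
    unfolding t_def using LIMSEQ_inverse_real_of_nat by (auto simp: field_simps)
  note along_ray = tendsto_K2_along_ray[OF f dense t]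
  have "(\<lambda>n. K2 (t n) (t n) + t n) \<longlonglongrightarrow> f (0,0)"
    using tendsto_add[OF along_ray[of 1] t(1)] by simp
  moreover have "(1 - 1/100) / 12 \<le> K2 (t n) (t n) + t n" for n
    using K2_diagonal_lower_bound[of "t n" "1/100"] t(2)[of n] by simp
  ultimately have lower: "(1 - 1/100) / 12 \<le> f (0,0)"
    by (intro LIMSEQ_le_const) auto
  have "(\<lambda>n. K2 (t n) (t n / 2) - 5/4 * t n) \<longlonglongrightarrow> f (0,0)"
    using tendsto_diff[OF along_ray[of "1/2"] tendsto_mult_right_zero[OF t(1), where c = "5/4"]] by simp
  moreover have "K2 (t n) (t n / 2) - 5/4 * t n \<le> (1/100) / 4 + (1 - 1/100) / 24" for n
    using K2_half_upper_bound[of "t n" "1/100"] t(2)[of n] by simp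
  ultimately have upper: "f (0,0) \<le> (1/100) / 4 + (1 - 1/100) / 24"
    by (intro LIMSEQ_le_const2) auto
  from lower upper show False
    by simp
qed

theorem theorem2p9:
  shows "\<not> continuous (at (0,0) within ({0..1} \<times> {0..1})) (\<lambda>(x::real, y::real). K2 x y)
    \<and> \<not> (\<exists>f :: real \<times> real \<Rightarrow> real.
          continuous (at (0,0) within ({0..1} \<times> {0..1})) f \<and>
          {0..1} \<times> {0..1} \<subseteq> closure {p \<in> {0..1} \<times> {0..1}. f p = K2 (fst p) (snd p)})"
proof
  show "\<not> continuous (at (0,0) within ({0..1} \<times> {0..1})) (\<lambda>(x::real, y::real). K2 x y)"
  proof
    assume "continuous (at (0,0) within ({0..1} \<times> {0..1})) (\<lambda>(x::real, y::real). K2 x y)"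
    moreover have "{0..1} \<times> {0..1} \<subseteq> closure {p \<in> {0..1::real} \<times> {0..1::real}. (\<lambda>(x, y). K2 x y) p = K2 (fst p) (snd p)}"
      by (simp add: case_prod_beta closure_subset)
    ultimately show False
      using no_function_continuous_at_origin_agreeing_densely_with_K2 by blast
  qed
qed (rule no_function_continuous_at_origin_agreeing_densely_with_K2)

end
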